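(* Consider the climate-coalition game with linear-quadratic utility and populations $P_1>P_2>\dots>P_N>0$ (all distinct), $N\ge 3$. Restrict attention to pure-strategy Nash equilibria of the participation stage in which the coalition is nonempty. Then in any such equilibrium the coalition has at most two members, and country 1 (the most populous) is always a member. More precisely: (i) if $2P_2<P_1$, the unique equilibrium coalition is $\{1\}$; (ii) if $2P_2=P_1$, the equilibrium coalitions are exactly $\{1\}$ and $\{1,2\}$; (iii) if $2P_2>P_1$, every equilibrium coalition has exactly two members and is of the form $\{1,j\}$ with $j\in\{2,3,\dots,l\}$, where $l$ is the largest index such that $P_l\ge\max\{P_1/2,\;2P_2-P_1\}$; conversely each such $\{1,j\}$ is an equilibrium coalition.
   Context: Climate-coalition game: $N$ countries with populations $P_i>0$. The per-capita utility in country $i$ is $u_i=\beta A-\frac{\gamma}{2}a_i^2$ with $\beta,\gamma>0$, where $a_i\in\mathbb{R}$ is country $i$'s per-capita abatement and $A=\sum_j P_ja_j$. Stage 1: each country simultaneously and non-cooperatively decides whether to join a coalition $S$ (a strategy is "join" or "stay out"). Stage 2: the members of $S$ jointly choose their per-capita abatements to maximize the coalition's total welfare $W_S=\sum_{i\in S}P_iu_i$ (no transfers), while each outsider chooses its per-capita abatement to maximize its own $u_i$. A participation profile is a Nash equilibrium if no country can strictly increase its per-capita utility (evaluated at the resulting stage-2 outcome) by unilaterally switching its participation decision. (A one-member coalition and an empty coalition induce the same abatements, which is why only nonempty coalitions are considered.) *)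

theory Defs
  imports Main Complex_Main
begin

text \<open>Countries are indexed by 1..N; populations P; abatement profile a (per capita).\<close>

definition total_abatement :: "nat \<Rightarrow> (nat \<Rightarrow> real) \<Rightarrow> (nat \<Rightarrow> real) \<Rightarrow> real" where
  "total_abatement N P a = (\<Sum>j\<in>{1..N}. P j * a j)"

definition util :: "nat \<Rightarrow> (nat \<Rightarrow> real) \<Rightarrow> real \<Rightarrow> real \<Rightarrow> nat \<Rightarrow> (nat \<Rightarrow> real) \<Rightarrow> real" where
  "util N P \<beta> \<gamma> i a = \<beta> * total_abatement N P a - \<gamma> / 2 * (a i)^2"

definition coalition_welfare :: "nat \<Rightarrow> (nat \<Rightarrow> real) \<Rightarrow> real \<Rightarrow> real \<Rightarrow> nat set \<Rightarrow> (nat \<Rightarrow> real) \<Rightarrow> real" where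
  "coalition_welfare N P \<beta> \<gamma> S a = (\<Sum>i\<in>S. P i * util N P \<beta> \<gamma> i a)"

definition stage2_outcome :: "nat \<Rightarrow> (nat \<Rightarrow> real) \<Rightarrow> real \<Rightarrow> real \<Rightarrow> nat set \<Rightarrow> (nat \<Rightarrow> real) \<Rightarrow> bool" where
  "stage2_outcome N P \<beta> \<gamma> S a \<longleftrightarrow>
     (\<forall>b. (\<forall>j. j \<notin> S \<longrightarrow> b j = a j) \<longrightarrow>
           coalition_welfare N P \<beta> \<gamma> S b \<le> coalition_welfare N P \<beta> \<gamma> S a) \<and>
     (\<forall>i\<in>{1..N} - S. \<forall>x. util N P \<beta> \<gamma> i (a(i := x)) \<le> util N P \<beta> \<gamma> i a)"

definition toggle :: "nat \<Rightarrow> nat set \<Rightarrow> nat set" where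
  "toggle i S = (if i \<in> S then S - {i} else insert i S)"

text \<open>Participation-stage Nash equilibrium: no country can strictly increase its per-capita
  utility (at the resulting stage-2 outcome) by unilaterally switching its decision.
  (The stage-2 outcome is unique; we quantify over all stage-2 outcomes.)\<close>
definition participation_NE :: "nat \<Rightarrow> (nat \<Rightarrow> real) \<Rightarrow> real \<Rightarrow> real \<Rightarrow> nat set \<Rightarrow> bool" where
  "participation_NE N P \<beta> \<gamma> S \<longleftrightarrow> S \<subseteq> {1..N} \<and>
     (\<forall>i\<in>{1..N}. \<forall>a a'. stage2_outcome N P \<beta> \<gamma> S a \<longrightarrow>
        stage2_outcome N P \<beta> \<gamma> (toggle i S) a' \<longrightarrow>
        util N P \<beta> \<gamma> i a' \<le> util N P \<beta> \<gamma> i a)"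

end

theory Submission
  imports Defs
begin

text \<open>Completing the square shows that stage 2 has a unique outcome: every member of \<open>S\<close> abates
  \<open>\<beta> P(S) / \<gamma>\<close> and every outsider \<open>i\<close> abates \<open>\<beta> P\<^sub>i / \<gamma>\<close>. Evaluating utilities there, a
  nonempty coalition is a participation equilibrium iff it is internally stable (\<open>P(S) \<le> 3 P\<^sub>i\<close>
  for every member) and externally stable (\<open>2 P\<^sub>i \<le> P(S)\<close> for every outsider). With distinct
  populations the smallest member of a coalition with three or more members violates internal
  stability, and country 1 as an outsider would violate external stability, since two smaller
  countries have less than \<open>2 P\<^sub>1\<close> together.\<close>

definition population :: "(nat \<Rightarrow> real) \<Rightarrow> nat set \<Rightarrow> real" where
  "population P S = (\<Sum>i\<in>S. P i)"

definition coalition_abatement :: "real \<Rightarrow> real \<Rightarrow> (nat \<Rightarrow> real) \<Rightarrow> nat set \<Rightarrow> nat \<Rightarrow> real" where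
  "coalition_abatement \<beta> \<gamma> P S k = \<beta> * (if k \<in> S then population P S else P k) / \<gamma>"

lemma total_abatement_change:
  assumes "S \<subseteq> {1..N}" and "\<forall>j. j \<notin> S \<longrightarrow> b j = a j"
  shows "total_abatement N P b - total_abatement N P a = (\<Sum>i\<in>S. P i * (b i - a i))"
proof -
  have "total_abatement N P b - total_abatement N P a = (\<Sum>i\<in>{1..N}. P i * (b i - a i))"
    by (simp add: total_abatement_def sum_subtractf right_diff_distrib)
  also have "\<dots> = (\<Sum>i\<in>S. P i * (b i - a i))"
    using assms by (intro sum.mono_neutral_right) auto
  finally show ?thesis .
qed

lemma coalition_welfare_change:
  assumes S: "S \<subseteq> {1..N}" and agree: "\<forall>j. j \<notin> S \<longrightarrow> b j = a j" and "\<gamma> \<noteq> 0"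
  shows "coalition_welfare N P \<beta> \<gamma> S b - coalition_welfare N P \<beta> \<gamma> S a
    = \<gamma> / 2 * (\<Sum>i\<in>S. P i * ((a i - coalition_abatement \<beta> \<gamma> P S i)\<^sup>2
                                 - (b i - coalition_abatement \<beta> \<gamma> P S i)\<^sup>2))"
proof -
  define c where "c = \<beta> * population P S / \<gamma>"
  define D where "D = total_abatement N P b - total_abatement N P a"
  have D: "D = (\<Sum>i\<in>S. P i * (b i - a i))"
    unfolding D_def using total_abatement_change[OF S agree] .
  have "coalition_welfare N P \<beta> \<gamma> S b - coalition_welfare N P \<beta> \<gamma> S a
      = (\<Sum>i\<in>S. P i * (\<beta> * D)) - (\<Sum>i\<in>S. P i * (\<gamma> / 2 * ((b i)\<^sup>2 - (a i)\<^sup>2)))"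
    unfolding coalition_welfare_def util_def D_def sum_subtractf[symmetric]
    by (intro sum.cong) (auto simp: algebra_simps)
  also have "(\<Sum>i\<in>S. P i * (\<beta> * D)) = \<gamma> * c * D"
    using \<open>\<gamma> \<noteq> 0\<close> by (simp add: c_def population_def sum_distrib_right[symmetric])
  also have "\<dots> = (\<Sum>i\<in>S. P i * (\<gamma> * c * (b i - a i)))"
    unfolding D sum_distrib_left by (intro sum.cong) auto
  also have "\<dots> - (\<Sum>i\<in>S. P i * (\<gamma> / 2 * ((b i)\<^sup>2 - (a i)\<^sup>2)))
      = \<gamma> / 2 * (\<Sum>i\<in>S. P i * ((a i - c)\<^sup>2 - (b i - c)\<^sup>2))"
    unfolding sum_distrib_left sum_subtractf[symmetric]
    by (intro sum.cong) (auto simp: power2_eq_square algebra_simps)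
  also have "\<dots> = \<gamma> / 2 * (\<Sum>i\<in>S. P i * ((a i - coalition_abatement \<beta> \<gamma> P S i)\<^sup>2
                                 - (b i - coalition_abatement \<beta> \<gamma> P S i)\<^sup>2))"
    by (simp add: coalition_abatement_def c_def)
  finally show ?thesis .
qed

lemma coalition_best_response_iff:
  assumes S: "S \<subseteq> {1..N}" and pos: "\<forall>i\<in>S. 0 < P i" and "0 < \<gamma>"
  shows "(\<forall>b. (\<forall>j. j \<notin> S \<longrightarrow> b j = a j) \<longrightarrow>
            coalition_welfare N P \<beta> \<gamma> S b \<le> coalition_welfare N P \<beta> \<gamma> S a)
    \<longleftrightarrow> (\<forall>i\<in>S. a i = coalition_abatement \<beta> \<gamma> P S i)"
    (is "?best \<longleftrightarrow> ?opt")
proof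
  assume ?best
  show ?opt
  proof
    fix k assume k: "k \<in> S"
    define x where "x = coalition_abatement \<beta> \<gamma> P S"
    have fin: "finite S" using S finite_subset by blast
    have "coalition_welfare N P \<beta> \<gamma> S (a(k := x k)) - coalition_welfare N P \<beta> \<gamma> S a
        = \<gamma> / 2 * (\<Sum>i\<in>S. P i * ((a i - x i)\<^sup>2 - ((a(k := x k)) i - x i)\<^sup>2))"
      using k \<open>0 < \<gamma>\<close> unfolding x_def by (intro coalition_welfare_change[OF S]) auto
    also have "\<dots> = \<gamma> / 2 * (\<Sum>i\<in>S. if i = k then P k * (a k - x k)\<^sup>2 else 0)"
      by (intro arg_cong[where f = "(*) _"] sum.cong) auto
    also have "\<dots> = \<gamma> / 2 * P k * (a k - x k)\<^sup>2"
      using fin k by simp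
    moreover have "coalition_welfare N P \<beta> \<gamma> S (a(k := x k)) \<le> coalition_welfare N P \<beta> \<gamma> S a"
      using \<open>?best\<close> k by simp
    ultimately have "\<gamma> / 2 * P k * (a k - x k)\<^sup>2 \<le> 0"
      by linarith
    moreover have "0 < \<gamma> / 2 * P k" using \<open>0 < \<gamma>\<close> pos k by simp
    ultimately show "a k = x k"
      by (smt (verit) mult_pos_pos zero_less_power2)
  qed
next
  assume ?opt
  show ?best
  proof (intro allI impI)
    fix b assume agree: "\<forall>j. j \<notin> S \<longrightarrow> b j = a j"
    have "(\<Sum>i\<in>S. P i * ((a i - coalition_abatement \<beta> \<gamma> P S i)\<^sup>2
                       - (b i - coalition_abatement \<beta> \<gamma> P S i)\<^sup>2)) \<le> 0"
    proof (rule sum_nonpos)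
      fix i assume "i \<in> S"
      then show "P i * ((a i - coalition_abatement \<beta> \<gamma> P S i)\<^sup>2
                       - (b i - coalition_abatement \<beta> \<gamma> P S i)\<^sup>2) \<le> 0"
        using \<open>?opt\<close> pos by (simp add: mult_nonneg_nonpos less_imp_le)
    qed
    then have "\<gamma> / 2 * (\<Sum>i\<in>S. P i * ((a i - coalition_abatement \<beta> \<gamma> P S i)\<^sup>2
                       - (b i - coalition_abatement \<beta> \<gamma> P S i)\<^sup>2)) \<le> 0"
      using \<open>0 < \<gamma>\<close> by (simp add: mult_nonneg_nonpos)
    then show "coalition_welfare N P \<beta> \<gamma> S b \<le> coalition_welfare N P \<beta> \<gamma> S a"
      using coalition_welfare_change[OF S agree, where \<gamma> = \<gamma> and P = P and \<beta> = \<beta>] \<open>0 < \<gamma>\<close>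
      by simp
  qed
qed

lemma outsider_best_response_iff:
  assumes i: "i \<in> {1..N}" and "0 < P i" and "0 < \<gamma>"
  shows "(\<forall>x. util N P \<beta> \<gamma> i (a(i := x)) \<le> util N P \<beta> \<gamma> i a) \<longleftrightarrow> a i = \<beta> * P i / \<gamma>"
proof -
  have welfare: "coalition_welfare N P \<beta> \<gamma> {i} b = P i * util N P \<beta> \<gamma> i b" for b
    by (simp add: coalition_welfare_def)
  have "(\<forall>x. util N P \<beta> \<gamma> i (a(i := x)) \<le> util N P \<beta> \<gamma> i a)
    \<longleftrightarrow> (\<forall>b. (\<forall>j. j \<notin> {i} \<longrightarrow> b j = a j) \<longrightarrow>
            coalition_welfare N P \<beta> \<gamma> {i} b \<le> coalition_welfare N P \<beta> \<gamma> {i} a)"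
  proof (intro iffI allI impI)
    fix b assume "\<forall>x. util N P \<beta> \<gamma> i (a(i := x)) \<le> util N P \<beta> \<gamma> i a"
      and "\<forall>j. j \<notin> {i} \<longrightarrow> b j = a j"
    moreover from this(2) have "b = a(i := b i)" by auto
    ultimately show "coalition_welfare N P \<beta> \<gamma> {i} b \<le> coalition_welfare N P \<beta> \<gamma> {i} a"
      unfolding welfare using \<open>0 < P i\<close> by (metis mult_left_mono less_imp_le)
  next
    fix x assume "\<forall>b. (\<forall>j. j \<notin> {i} \<longrightarrow> b j = a j) \<longrightarrow>
            coalition_welfare N P \<beta> \<gamma> {i} b \<le> coalition_welfare N P \<beta> \<gamma> {i} a"
    then have "P i * util N P \<beta> \<gamma> i (a(i := x)) \<le> P i * util N P \<beta> \<gamma> i a"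
      unfolding welfare by simp
    then show "util N P \<beta> \<gamma> i (a(i := x)) \<le> util N P \<beta> \<gamma> i a"
      using \<open>0 < P i\<close> by simp
  qed
  also have "\<dots> \<longleftrightarrow> a i = \<beta> * P i / \<gamma>"
    using coalition_best_response_iff[of "{i}" N P \<gamma>] i assms(2,3)
    by (simp add: coalition_abatement_def population_def)
  finally show ?thesis .
qed

lemma stage2_outcome_iff:
  assumes S: "S \<subseteq> {1..N}" and pos: "\<forall>i\<in>{1..N}. 0 < P i" and "0 < \<gamma>"
  shows "stage2_outcome N P \<beta> \<gamma> S a \<longleftrightarrow> (\<forall>k\<in>{1..N}. a k = coalition_abatement \<beta> \<gamma> P S k)"
proof -
  have "(\<forall>i\<in>{1..N} - S. \<forall>x. util N P \<beta> \<gamma> i (a(i := x)) \<le> util N P \<beta> \<gamma> i a)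
    \<longleftrightarrow> (\<forall>i\<in>{1..N} - S. a i = coalition_abatement \<beta> \<gamma> P S i)"
    using outsider_best_response_iff pos \<open>0 < \<gamma>\<close> by (simp add: coalition_abatement_def)
  moreover have "\<forall>i\<in>S. 0 < P i" using S pos by blast
  ultimately show ?thesis
    unfolding stage2_outcome_def using coalition_best_response_iff[OF S _ \<open>0 < \<gamma>\<close>] S by blast
qed

text \<open>Utility of country \<open>i\<close> at the stage-2 outcome of coalition \<open>S\<close>, in units of \<open>\<beta>\<^sup>2 / \<gamma>\<close>.\<close>
definition payoff :: "nat \<Rightarrow> (nat \<Rightarrow> real) \<Rightarrow> nat set \<Rightarrow> nat \<Rightarrow> real" where
  "payoff N P S i = population P S ^ 2 + (\<Sum>j\<in>{1..N} - S. P j ^ 2)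
     - (if i \<in> S then population P S else P i) ^ 2 / 2"

lemma util_stage2_outcome:
  assumes S: "S \<subseteq> {1..N}" and pos: "\<forall>i\<in>{1..N}. 0 < P i" and "0 < \<gamma>"
    and outcome: "stage2_outcome N P \<beta> \<gamma> S a" and i: "i \<in> {1..N}"
  shows "util N P \<beta> \<gamma> i a = \<beta>\<^sup>2 / \<gamma> * payoff N P S i"
proof -
  have a: "\<forall>k\<in>{1..N}. a k = coalition_abatement \<beta> \<gamma> P S k"
    using outcome stage2_outcome_iff[OF S pos \<open>0 < \<gamma>\<close>] by blast
  have "total_abatement N P a = (\<Sum>j\<in>S. P j * a j) + (\<Sum>j\<in>{1..N} - S. P j * a j)"
    unfolding total_abatement_def using S by (simp add: sum.subset_diff add.commute)
  also have "(\<Sum>j\<in>S. P j * a j) = (\<Sum>j\<in>S. P j) * (\<beta> * population P S / \<gamma>)"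
    unfolding sum_distrib_right using S a by (intro sum.cong) (auto simp: coalition_abatement_def)
  also have "\<dots> = \<beta> / \<gamma> * population P S ^ 2"
    by (simp add: population_def power2_eq_square)
  also have "(\<Sum>j\<in>{1..N} - S. P j * a j) = \<beta> / \<gamma> * (\<Sum>j\<in>{1..N} - S. P j ^ 2)"
    unfolding sum_distrib_left using a
    by (intro sum.cong) (auto simp: coalition_abatement_def power2_eq_square)
  finally have A: "total_abatement N P a
      = \<beta> / \<gamma> * (population P S ^ 2 + (\<Sum>j\<in>{1..N} - S. P j ^ 2))"
    by (simp add: algebra_simps)
  have ai: "a i = \<beta> / \<gamma> * (if i \<in> S then population P S else P i)"
    using a i by (simp add: coalition_abatement_def)
  show ?thesis
    using \<open>0 < \<gamma>\<close> unfolding util_def payoff_def A ai by (simp add: power2_eq_square field_simps)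
qed

lemma toggle_subset: "S \<subseteq> {1..N} \<Longrightarrow> i \<in> {1..N} \<Longrightarrow> toggle i S \<subseteq> {1..N}"
  unfolding toggle_def by auto

lemma participation_NE_iff_payoff:
  assumes pos: "\<forall>i\<in>{1..N}. 0 < P i" and "0 < \<beta>" and "0 < \<gamma>"
  shows "participation_NE N P \<beta> \<gamma> S
    \<longleftrightarrow> S \<subseteq> {1..N} \<and> (\<forall>i\<in>{1..N}. payoff N P (toggle i S) i \<le> payoff N P S i)"
proof (cases "S \<subseteq> {1..N}")
  case S: True
  have scale: "0 < \<beta>\<^sup>2 / \<gamma>" using \<open>0 < \<beta>\<close> \<open>0 < \<gamma>\<close> by simp
  have outcome: "stage2_outcome N P \<beta> \<gamma> T (coalition_abatement \<beta> \<gamma> P T)" if "T \<subseteq> {1..N}" for T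
    using stage2_outcome_iff[OF that pos \<open>0 < \<gamma>\<close>] by blast
  have "(\<forall>a a'. stage2_outcome N P \<beta> \<gamma> S a \<longrightarrow> stage2_outcome N P \<beta> \<gamma> (toggle i S) a' \<longrightarrow>
           util N P \<beta> \<gamma> i a' \<le> util N P \<beta> \<gamma> i a)
    \<longleftrightarrow> payoff N P (toggle i S) i \<le> payoff N P S i" if i: "i \<in> {1..N}" for i
    using util_stage2_outcome[OF S pos \<open>0 < \<gamma>\<close> _ i]
      util_stage2_outcome[OF toggle_subset[OF S i] pos \<open>0 < \<gamma>\<close> _ i]
      outcome[OF S] outcome[OF toggle_subset[OF S i]] scale
    by (metis mult_le_cancel_left_pos)
  then show ?thesis
    unfolding participation_NE_def using S by blast
qed (simp add: participation_NE_def)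

lemma payoff_leave_le_iff:
  assumes S: "S \<subseteq> {1..N}" and i: "i \<in> S"
  shows "payoff N P (S - {i}) i \<le> payoff N P S i
    \<longleftrightarrow> (population P S - P i) * (population P S - 3 * P i) \<le> 0"
proof -
  have fin: "finite S" using S finite_subset by blast
  have "{1..N} - (S - {i}) = insert i ({1..N} - S)" using S i by blast
  then have outsiders: "(\<Sum>j\<in>{1..N} - (S - {i}). P j ^ 2) = P i ^ 2 + (\<Sum>j\<in>{1..N} - S. P j ^ 2)"
    using i by simp
  have remaining: "population P (S - {i}) = population P S - P i"
    unfolding population_def using fin i by (simp add: sum_diff1)
  show ?thesis
    unfolding payoff_def outsiders remaining using i
    by (simp add: power2_eq_square algebra_simps) linarith
qed

lemma payoff_join_le_iff:
  assumes S: "S \<subseteq> {1..N}" and i: "i \<in> {1..N}" "i \<notin> S"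
  shows "payoff N P (insert i S) i \<le> payoff N P S i
    \<longleftrightarrow> population P S * (2 * P i - population P S) \<le> 0"
proof -
  have fin: "finite S" using S finite_subset by blast
  have "{1..N} - insert i S = ({1..N} - S) - {i}" by blast
  then have outsiders: "(\<Sum>j\<in>{1..N} - insert i S. P j ^ 2) = (\<Sum>j\<in>{1..N} - S. P j ^ 2) - P i ^ 2"
    using i by (simp add: sum_diff1)
  have "population P (insert i S) = population P S + P i"
    unfolding population_def using fin i by simp
  then show ?thesis
    unfolding payoff_def outsiders using i by (simp add: power2_eq_square algebra_simps)
qed

definition stable_coalition :: "nat \<Rightarrow> (nat \<Rightarrow> real) \<Rightarrow> nat set \<Rightarrow> bool" where
  "stable_coalition N P S \<longleftrightarrow> S \<subseteq> {1..N}
     \<and> (\<forall>i\<in>S. population P S \<le> 3 * P i)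
     \<and> (\<forall>i\<in>{1..N} - S. 2 * P i \<le> population P S)"

lemma population_pos:
  assumes "S \<subseteq> {1..N}" "S \<noteq> {}" and "\<forall>i\<in>{1..N}. 0 < P i"
  shows "0 < population P S"
  unfolding population_def using assms finite_subset[OF assms(1)] by (intro sum_pos) auto

lemma population_ge_member:
  assumes "S \<subseteq> {1..N}" "i \<in> S" and "\<forall>i\<in>{1..N}. 0 < P i"
  shows "P i \<le> population P S"
  unfolding population_def using assms finite_subset[OF assms(1)]
  by (intro member_le_sum) (auto intro: less_imp_le)

lemma participation_NE_iff_stable:
  assumes pos: "\<forall>i\<in>{1..N}. 0 < P i" and "0 < \<beta>" and "0 < \<gamma>" and "S \<noteq> {}"
  shows "participation_NE N P \<beta> \<gamma> S \<longleftrightarrow> stable_coalition N P S"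
proof (cases "S \<subseteq> {1..N}")
  case S: True
  have internal: "payoff N P (toggle i S) i \<le> payoff N P S i \<longleftrightarrow> population P S \<le> 3 * P i"
    if "i \<in> S" for i
  proof -
    have "0 < P i" "P i \<le> population P S"
      using that S pos population_ge_member[OF S that pos] by auto
    then show ?thesis
      unfolding toggle_def using payoff_leave_le_iff[OF S that] that
      by (auto simp: mult_le_0_iff)
  qed
  have external: "payoff N P (toggle i S) i \<le> payoff N P S i \<longleftrightarrow> 2 * P i \<le> population P S"
    if "i \<in> {1..N} - S" for i
    using payoff_join_le_iff[OF S] that population_pos[OF S \<open>S \<noteq> {}\<close> pos]
    by (auto simp: toggle_def mult_le_0_iff)
  show ?thesis
    unfolding participation_NE_iff_payoff[OF pos \<open>0 < \<beta>\<close> \<open>0 < \<gamma>\<close>] stable_coalition_def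
    using internal external S by blast
qed (simp add: participation_NE_def stable_coalition_def)

lemma initial_segment_Greatest_threshold:
  fixes P :: "nat \<Rightarrow> real"
  assumes antitone: "\<And>i j. 1 \<le> i \<Longrightarrow> i \<le> j \<Longrightarrow> j \<le> N \<Longrightarrow> P j \<le> P i"
    and k: "k \<in> {1..N}" "M \<le> P k"
  shows "{1..(GREATEST l. l \<in> {1..N} \<and> M \<le> P l)} = {j \<in> {1..N}. M \<le> P j}"
proof -
  define l where "l = (GREATEST l. l \<in> {1..N} \<and> M \<le> P l)"
  have bounded: "y \<le> N" if "y \<in> {1..N} \<and> M \<le> P y" for y
    using that by simp
  have l: "l \<in> {1..N} \<and> M \<le> P l"
    unfolding l_def by (rule GreatestI_nat[where k = k, OF _ bounded]) (use k in simp)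
  have "j \<in> {1..l}" if "j \<in> {1..N}" "M \<le> P j" for j
    using that Greatest_le_nat[where k = j, OF _ bounded] by (simp add: l_def)
  moreover have "j \<in> {j \<in> {1..N}. M \<le> P j}" if "j \<in> {1..l}" for j
    using l that antitone[of j l] by auto
  ultimately show ?thesis
    unfolding l_def[symmetric] by blast
qed

context
  fixes N :: nat and P :: "nat \<Rightarrow> real"
  assumes positive: "\<forall>i\<in>{1..N}. 0 < P i"
    and decreasing: "\<And>i j. 1 \<le> i \<Longrightarrow> i < j \<Longrightarrow> j \<le> N \<Longrightarrow> P j < P i"
begin

lemma antitone_populations: "1 \<le> i \<Longrightarrow> i \<le> j \<Longrightarrow> j \<le> N \<Longrightarrow> P j \<le> P i"
  using decreasing[of i j] by (cases "i = j") auto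

lemma stable_card_le_2:
  assumes "stable_coalition N P S"
  shows "card S \<le> 2"
proof (rule ccontr)
  assume "\<not> card S \<le> 2"
  have S: "S \<subseteq> {1..N}" using assms unfolding stable_coalition_def by blast
  then have fin: "finite S" using finite_subset by blast
  define m where "m = Max S"
  have m: "m \<in> S" unfolding m_def using fin \<open>\<not> card S \<le> 2\<close> by (intro Max_in) auto
  have "\<not> card (S - {m}) \<le> Suc 0"
    using \<open>\<not> card S \<le> 2\<close> m fin by (simp add: card_Diff_singleton)
  then obtain a b where ab: "a \<in> S - {m}" "b \<in> S - {m}" "a \<noteq> b"
    using fin by (auto simp: card_le_Suc0_iff_eq)
  have smaller: "P m < P x" if "x \<in> S - {m}" for x
  proof -
    have "x < m" using that Max_ge[OF fin, of x] unfolding m_def by fastforce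
    then show ?thesis using that S m by (intro decreasing) auto
  qed
  have "P m + P a + P b = (\<Sum>i\<in>{m, a, b}. P i)"
    using ab by simp
  also have "\<dots> \<le> population P S"
    unfolding population_def using ab m fin S positive
    by (intro sum_mono2) (auto intro: less_imp_le)
  also have "\<dots> \<le> 3 * P m"
    using assms m unfolding stable_coalition_def by blast
  finally show False using smaller[OF ab(1)] smaller[OF ab(2)] by linarith
qed

lemma stable_contains_1:
  assumes "stable_coalition N P S" and "S \<noteq> {}"
  shows "1 \<in> S"
proof (rule ccontr)
  assume "1 \<notin> S"
  have S: "S \<subseteq> {1..N}" using assms unfolding stable_coalition_def by blast
  then have fin: "finite S" using finite_subset by blast
  have one: "1 \<in> {1..N} - S" using S \<open>S \<noteq> {}\<close> \<open>1 \<notin> S\<close> by auto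
  then have "2 * P 1 \<le> population P S"
    using assms unfolding stable_coalition_def by blast
  also have "population P S < (\<Sum>i\<in>S. P 1)"
    unfolding population_def
  proof (rule sum_strict_mono[OF fin \<open>S \<noteq> {}\<close>])
    fix i assume "i \<in> S"
    then have "1 < i" "i \<le> N" using S \<open>1 \<notin> S\<close> by (auto simp: subset_iff le_less)
    then show "P i < P 1" by (intro decreasing) auto
  qed
  also have "\<dots> = real (card S) * P 1" by simp
  also have "\<dots> \<le> 2 * P 1"
    using stable_card_le_2[OF assms(1)] positive one by (intro mult_right_mono) (auto intro: less_imp_le)
  finally show False by simp
qed

lemma stable_cases:
  assumes "stable_coalition N P S" and "S \<noteq> {}"
  shows "S = {1} \<or> (\<exists>j\<in>{2..N}. S = {1, j})"
proof -
  have S: "S \<subseteq> {1..N}" using assms unfolding stable_coalition_def by blast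
  then have fin: "finite S" using finite_subset by blast
  have "1 \<in> S" using stable_contains_1[OF assms] .
  then have "card (S - {1}) \<le> Suc 0"
    using stable_card_le_2[OF assms(1)] fin by (simp add: card_Diff_singleton)
  then consider "S - {1} = {}" | j where "S - {1} = {j}"
    using fin by (auto simp: card_le_Suc_iff le_Suc_eq card_1_singleton_iff)
  then show ?thesis
  proof cases
    case 1
    then show ?thesis using \<open>1 \<in> S\<close> by blast
  next
    case (2 j)
    then have "j \<in> S" "j \<noteq> 1" by blast+
    then have "j \<in> {2..N}" using S by (auto simp: subset_iff)
    moreover have "S = {1, j}" using 2 \<open>1 \<in> S\<close> by blast
    ultimately show ?thesis by blast
  qed
qed

lemma stable_singleton_iff:
  assumes "2 \<le> N"
  shows "stable_coalition N P {1} \<longleftrightarrow> 2 * P 2 \<le> P 1"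
proof -
  have "stable_coalition N P {1} \<longleftrightarrow> (\<forall>i\<in>{2..N}. 2 * P i \<le> P 1)"
    unfolding stable_coalition_def population_def using assms positive by auto
  also have "\<dots> \<longleftrightarrow> 2 * P 2 \<le> P 1"
    using assms antitone_populations[of 2] by force
  finally show ?thesis .
qed

lemma stable_pair_iff:
  assumes j: "j \<in> {2..N}"
  shows "stable_coalition N P {1, j} \<longleftrightarrow> P 1 \<le> 2 * P j \<and> (j = 2 \<or> 2 * P 2 \<le> P 1 + P j)"
proof -
  have "P j < P 1" using j by (intro decreasing) auto
  then have "stable_coalition N P {1, j}
      \<longleftrightarrow> P 1 \<le> 2 * P j \<and> (\<forall>i\<in>{1..N} - {1, j}. 2 * P i \<le> P 1 + P j)"
    unfolding stable_coalition_def population_def using j by auto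
  also have "(\<forall>i\<in>{1..N} - {1, j}. 2 * P i \<le> P 1 + P j) \<longleftrightarrow> (j = 2 \<or> 2 * P 2 \<le> P 1 + P j)"
  proof (cases "j = 2")
    case True
    have "P i \<le> P 2" if "i \<in> {1..N} - {1, j}" for i
      using that antitone_populations[of 2 i] by auto
    then show ?thesis using True \<open>P j < P 1\<close> by fastforce
  next
    case False
    have "P i \<le> P 2" if "i \<in> {1..N} - {1, j}" for i
      using that antitone_populations[of 2 i] by auto
    moreover have "2 \<in> {1..N} - {1, j}" using j False by auto
    ultimately show ?thesis using False by fastforce
  qed
  finally show ?thesis .
qed

lemma stable_iff_leader_alone:
  assumes "2 \<le> N" and "2 * P 2 < P 1" and "S \<noteq> {}"
  shows "stable_coalition N P S \<longleftrightarrow> S = {1}"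
proof
  assume "stable_coalition N P S"
  moreover have "\<not> stable_coalition N P {1, j}" if "j \<in> {2..N}" for j
    using that stable_pair_iff antitone_populations[of 2 j] \<open>2 * P 2 < P 1\<close> by auto
  ultimately show "S = {1}" using stable_cases \<open>S \<noteq> {}\<close> by blast
qed (use stable_singleton_iff assms in simp)

lemma stable_iff_leader_alone_or_with_2:
  assumes "2 \<le> N" and "2 * P 2 = P 1" and "S \<noteq> {}"
  shows "stable_coalition N P S \<longleftrightarrow> S = {1} \<or> S = {1, 2}"
proof
  assume "stable_coalition N P S"
  moreover have "\<not> stable_coalition N P {1, j}" if "j \<in> {2..N}" "j \<noteq> 2" for j
    using that stable_pair_iff decreasing[of 2 j] \<open>2 * P 2 = P 1\<close> by auto
  ultimately show "S = {1} \<or> S = {1, 2}"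
    using stable_cases \<open>S \<noteq> {}\<close> by blast
next
  assume "S = {1} \<or> S = {1, 2}"
  then show "stable_coalition N P S"
    using stable_singleton_iff stable_pair_iff[of 2] assms by auto
qed

lemma stable_iff_leader_with_partner:
  assumes "2 \<le> N" and "P 1 < 2 * P 2" and "S \<noteq> {}"
  shows "stable_coalition N P S \<longleftrightarrow>
    (\<exists>j\<in>{2..GREATEST l. l \<in> {1..N} \<and> max (P 1 / 2) (2 * P 2 - P 1) \<le> P l}. S = {1, j})"
proof -
  define M where "M = max (P 1 / 2) (2 * P 2 - P 1)"
  define l where "l = (GREATEST l. l \<in> {1..N} \<and> M \<le> P l)"
  have "P 2 < P 1" using assms by (intro decreasing) auto
  then have partner: "stable_coalition N P {1, j} \<longleftrightarrow> M \<le> P j" if "j \<in> {2..N}" for j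
    using stable_pair_iff[OF that] unfolding M_def by auto
  have "{1..l} = {j \<in> {1..N}. M \<le> P j}"
    unfolding l_def
    by (rule initial_segment_Greatest_threshold[where k = 2, OF antitone_populations])
      (use assms \<open>P 2 < P 1\<close> in \<open>auto simp: M_def\<close>)
  then have segment: "j \<in> {2..l} \<longleftrightarrow> j \<in> {2..N} \<and> M \<le> P j" for j
    by (metis (no_types, lifting) atLeastAtMost_iff mem_Collect_eq one_le_numeral order_trans)
  have "\<not> stable_coalition N P {1}"
    using stable_singleton_iff assms by simp
  then have "stable_coalition N P S \<longleftrightarrow> (\<exists>j\<in>{2..N}. S = {1, j} \<and> M \<le> P j)"
    using stable_cases[OF _ \<open>S \<noteq> {}\<close>] partner by blast
  also have "\<dots> \<longleftrightarrow> (\<exists>j\<in>{2..l}. S = {1, j})"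
    using segment by blast
  finally show ?thesis
    unfolding l_def M_def .
qed

end

theorem proposition4:
  fixes N :: nat and P :: "nat \<Rightarrow> real" and \<beta> \<gamma> :: real
  assumes "N \<ge> 3" and "\<beta> > 0" and "\<gamma> > 0"
    and "P N > 0"
    and "\<And>i j. 1 \<le> i \<Longrightarrow> i < j \<Longrightarrow> j \<le> N \<Longrightarrow> P j < P i"
  shows "(\<forall>S. S \<noteq> {} \<and> participation_NE N P \<beta> \<gamma> S \<longrightarrow> card S \<le> 2 \<and> 1 \<in> S)
    \<and> (2 * P 2 < P 1 \<longrightarrow>
         (\<forall>S. S \<noteq> {} \<longrightarrow> (participation_NE N P \<beta> \<gamma> S \<longleftrightarrow> S = {1})))
    \<and> (2 * P 2 = P 1 \<longrightarrow>
         (\<forall>S. S \<noteq> {} \<longrightarrow> (participation_NE N P \<beta> \<gamma> S \<longleftrightarrow> S = {1} \<or> S = {1, 2})))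
    \<and> (2 * P 2 > P 1 \<longrightarrow>
         (let l = (GREATEST l. l \<in> {1..N} \<and> P l \<ge> max (P 1 / 2) (2 * P 2 - P 1)) in
          \<forall>S. S \<noteq> {} \<longrightarrow> (participation_NE N P \<beta> \<gamma> S \<longleftrightarrow> (\<exists>j\<in>{2..l}. S = {1, j}))))"
proof -
  have positive: "\<forall>i\<in>{1..N}. 0 < P i"
  proof
    fix i assume "i \<in> {1..N}"
    then show "0 < P i"
      using assms(4) assms(5)[of i N] by (cases "i = N") auto
  qed
  have NE: "participation_NE N P \<beta> \<gamma> S \<longleftrightarrow> stable_coalition N P S" if "S \<noteq> {}" for S
    using participation_NE_iff_stable[OF positive assms(2,3) that] .
  have "2 \<le> N" using assms(1) by simp
  note stable = stable_card_le_2 stable_contains_1 stable_iff_leader_alone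
    stable_iff_leader_alone_or_with_2 stable_iff_leader_with_partner
  note stable = stable[OF positive assms(5)]
  show ?thesis
    unfolding Let_def
  proof (intro conjI impI allI)
    fix S assume "S \<noteq> {} \<and> participation_NE N P \<beta> \<gamma> S"
    then show "card S \<le> 2" and "1 \<in> S"
      using NE stable(1,2) by blast+
  qed (use NE stable(3-5) \<open>2 \<le> N\<close> in simp_all)
qed

end
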